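(* Let $p>2$ be a prime, $n\ge1$, $A$ a finite abelian $p$-group and $G$ a group containing $A$ as a normal subgroup with $G/A\cong\mathbb{Z}_{p^n}$, generated by the image of an element $t\in G$. If $[e]_\varphi$ is a subgroup of $G$ for every $\varphi\in{\rm Aut}\,G$, then $t^{-1}at=a$ for every $a\in\Omega_1(A)$.
   Context: For an automorphism $\varphi$ of $G$, $[e]_\varphi=\{z^{-1}\varphi(z)\mid z\in G\}$. $\Omega_k(A)=\{a\in A\mid a^{p^k}=e\}$. *)

theory Defs
  imports "HOL-Algebra.Algebra"
begin

definition twisted_class :: "('a, 'b) monoid_scheme \<Rightarrow> ('a \<Rightarrow> 'a) \<Rightarrow> 'a set" where
  "twisted_class G \<phi> = {inv\<^bsub>G\<^esub> z \<otimes>\<^bsub>G\<^esub> \<phi> z | z. z \<in> carrier G}"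

definition Omega :: "('a, 'b) monoid_scheme \<Rightarrow> nat \<Rightarrow> nat \<Rightarrow> 'a set \<Rightarrow> 'a set" where
  "Omega G p k A = {a \<in> A. a [^]\<^bsub>G\<^esub> (p ^ k) = \<one>\<^bsub>G\<^esub>}"

end

theory Submission
  imports Defs "HOL-Combinatorics.Orbits"
begin

text \<open>
  Suppose that conjugation \<alpha> by t moves some a \<in> \<Omega>_1(A). On \<Omega>_1(A) the map x \<mapsto> x^-1 \<alpha>(x) is a
  homomorphism with nontrivial image W, and \<alpha> permutes W with p-power order, so counting fixed
  points modulo p yields c, d \<in> \<Omega>_1(A) with d \<noteq> e, \<alpha>(c) = c d and \<alpha>(d) = d.
  Since G = A<t>, every y \<in> G fixes d and sends c to c d^\<kappa>(y), where \<kappa> : G \<rightarrow> \<int>/p is a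
  homomorphism vanishing on A with \<kappa>(t) = 1. As p is odd, w(y) = c^k d^(k(k-1)/2) with k = \<kappa>(y)
  is well defined; it is a crossed homomorphism constant on the cosets of A, so \<phi>(y) = y w(y) is an
  automorphism of G with [e]_\<phi> = w(G). This set contains c but not c^2, so it is not a subgroup.
\<close>

section \<open>Fixed points of maps of prime-power order\<close>

lemma self_in_orbit_of_funpow:
  assumes "(f ^^ m) x = x" "0 < m"
  shows "x \<in> orbit f x"
  unfolding orbit_altdef using assms by force

lemma card_orbit_dvd:
  assumes "(f ^^ m) x = x" "0 < m"
  shows "card (orbit f x) dvd m"
proof -
  have x: "x \<in> orbit f x" using self_in_orbit_of_funpow[OF assms] .
  define r where "r = funpow_dist1 f x x"
  have "card (orbit f x) = r"
    unfolding r_def orbit_conv_funpow_dist1[OF x]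
    using card_image[OF inj_on_funpow_dist1[OF x]] by simp
  moreover have "m mod r = 0"
  proof (rule ccontr)
    assume "m mod r \<noteq> 0"
    moreover have "(f ^^ (m mod r)) x = x"
      using funpow_mod_eq[OF funpow_dist1_prop[OF x]] assms(1) unfolding r_def by simp
    ultimately show False
      using funpow_dist1_least[of "m mod r" f x x] unfolding r_def by simp
  qed
  ultimately show ?thesis by auto
qed

lemma orbit_eq_of_mem:
  assumes "x \<in> orbit f x" "y \<in> orbit f x"
  shows "orbit f y = orbit f x"
proof
  show "orbit f y \<subseteq> orbit f x" using orbit_trans[OF _ assms(2)] by blast
  show "orbit f x \<subseteq> orbit f y" using orbit_trans[OF _ orbit_swap[OF assms]] by blast
qed

lemma orbit_subset_invariant:
  assumes "f ` S \<subseteq> S" "x \<in> S"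
  shows "orbit f x \<subseteq> S"
proof
  fix y assume "y \<in> orbit f x" then show "y \<in> S"
    by induction (use assms in auto)
qed

lemma orbit_of_moved_point_no_fixed_point:
  assumes "x \<in> orbit f x" "y \<in> orbit f x" "f x \<noteq> x"
  shows "f y \<noteq> y"
proof
  assume fixed: "f y = y"
  then have "orbit f y = {y}" by (simp add: orbit_eq_singleton_iff)
  then have "orbit f x = {y}" using orbit_eq_of_mem[OF assms(1,2)] by simp
  then show False using assms(1,3) fixed by simp
qed

lemma prime_dvd_card_orbit:
  assumes "Factorial_Ring.prime p" "(f ^^ (p ^ e)) x = x" "f x \<noteq> x"
  shows "p dvd card (orbit f x)"
proof -
  have period: "0 < p ^ e" using assms(1) prime_gt_0_nat by simp
  then obtain i where i: "card (orbit f x) = p ^ i"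
    using card_orbit_dvd[OF assms(2)] divides_primepow_nat[OF assms(1)] by blast
  have x: "x \<in> orbit f x" using self_in_orbit_of_funpow[OF assms(2) period] .
  have "card (orbit f x) \<noteq> 1"
  proof
    assume "card (orbit f x) = 1"
    then obtain z where "orbit f x = {z}" by (rule card_1_singletonE)
    then have "orbit f x = {x}" using x by simp
    then show False using assms(3) by (simp add: orbit_eq_singleton_iff)
  qed
  then show ?thesis using i by (cases i) auto
qed

lemma card_fixed_points_mod_prime:
  fixes p :: nat
  assumes "finite S" "f ` S \<subseteq> S" "Factorial_Ring.prime p" "\<forall>x\<in>S. (f ^^ (p ^ e)) x = x"
  shows "card {x \<in> S. f x = x} mod p = card S mod p"
proof -
  define M where "M = {x \<in> S. f x \<noteq> x}"
  have period: "0 < p ^ e" using assms(3) prime_gt_0_nat by simp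
  have self: "x \<in> orbit f x" if "x \<in> S" for x
    using self_in_orbit_of_funpow[OF assms(4)[rule_format, OF that] period] .
  have orbit_M: "orbit f x \<subseteq> M" if "x \<in> M" for x
  proof
    fix y assume y: "y \<in> orbit f x"
    have "y \<in> S" using subsetD[OF orbit_subset_invariant[OF assms(2)] y] that unfolding M_def by simp
    moreover have "f y \<noteq> y" using orbit_of_moved_point_no_fixed_point[OF self y] that unfolding M_def by simp
    ultimately show "y \<in> M" unfolding M_def by simp
  qed
  have orbits: "\<Union> (orbit f ` M) = M"
  proof
    show "\<Union> (orbit f ` M) \<subseteq> M" using orbit_M by (rule UN_least)
    show "M \<subseteq> \<Union> (orbit f ` M)" using self unfolding M_def by fastforce
  qed
  have "p dvd card (\<Union> (orbit f ` M))"
  proof (rule dvd_partition)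
    show "finite (\<Union> (orbit f ` M))" using orbits assms(1) M_def by simp
    show "\<forall>c\<in>orbit f ` M. p dvd card c"
    proof
      fix c assume "c \<in> orbit f ` M"
      then obtain x where "x \<in> S" "f x \<noteq> x" "c = orbit f x" unfolding M_def by blast
      then show "p dvd card c" using prime_dvd_card_orbit[OF assms(3) assms(4)[rule_format]] by simp
    qed
    show "\<forall>c1\<in>orbit f ` M. \<forall>c2\<in>orbit f ` M. c1 \<noteq> c2 \<longrightarrow> c1 \<inter> c2 = {}"
    proof (intro ballI impI equals0I)
      fix c1 c2 y assume "c1 \<in> orbit f ` M" "c2 \<in> orbit f ` M" "c1 \<noteq> c2" "y \<in> c1 \<inter> c2"
      moreover have "orbit f y = orbit f x" if "x \<in> M" "y \<in> orbit f x" for x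
        using orbit_eq_of_mem[OF self that(2)] that M_def by simp
      ultimately show False by auto
    qed
  qed
  moreover have "card S = card {x \<in> S. f x = x} + card M"
  proof -
    have "S = {x \<in> S. f x = x} \<union> M" unfolding M_def by auto
    then show ?thesis using assms(1) card_Un_disjoint[of "{x \<in> S. f x = x}" M]
      unfolding M_def by auto
  qed
  ultimately show ?thesis unfolding orbits by auto
qed

lemma exists_other_fixed_point:
  fixes p :: nat
  assumes "finite S" "f ` S \<subseteq> S" "Factorial_Ring.prime p" "\<forall>x\<in>S. (f ^^ (p ^ e)) x = x"
    and "p dvd card S" "x\<^sub>0 \<in> S" "f x\<^sub>0 = x\<^sub>0"
  obtains x where "x \<in> S" "x \<noteq> x\<^sub>0" "f x = x"
proof -
  define F where "F = {x \<in> S. f x = x}"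
  have "x\<^sub>0 \<in> F" using assms(6,7) unfolding F_def by simp
  have "p dvd card F"
    using card_fixed_points_mod_prime[OF assms(1-4)] assms(5) unfolding F_def by (simp add: mod_eq_0_iff_dvd)
  then have "card F \<noteq> 1" using assms(3) by (metis nat_dvd_1_iff_1 not_prime_1)
  then have "F \<noteq> {x\<^sub>0}" by auto
  then show ?thesis using that \<open>x\<^sub>0 \<in> F\<close> unfolding F_def by blast
qed

section \<open>Conjugation and crossed homomorphisms\<close>

definition conjugate :: "('a, 'b) monoid_scheme \<Rightarrow> 'a \<Rightarrow> 'a \<Rightarrow> 'a" where
  "conjugate G y x = inv\<^bsub>G\<^esub> y \<otimes>\<^bsub>G\<^esub> x \<otimes>\<^bsub>G\<^esub> y"

context group
begin

lemma conjugate_closed [simp]: "y \<in> carrier G \<Longrightarrow> x \<in> carrier G \<Longrightarrow> conjugate G y x \<in> carrier G"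
  unfolding conjugate_def by simp

lemma conjugate_hom: "y \<in> carrier G \<Longrightarrow> conjugate G y \<in> hom G G"
  unfolding conjugate_def hom_def by (auto simp: m_assoc) (metis inv_closed l_one m_assoc m_closed r_inv)

lemma conjugate_mult:
  "\<lbrakk>y \<in> carrier G; x \<in> carrier G; z \<in> carrier G\<rbrakk> \<Longrightarrow> conjugate G y (x \<otimes> z) = conjugate G y x \<otimes> conjugate G y z"
  using hom_mult[OF conjugate_hom] by blast

lemma conjugate_int_pow:
  "\<lbrakk>y \<in> carrier G; x \<in> carrier G\<rbrakk> \<Longrightarrow> conjugate G y (x [^] (k::int)) = conjugate G y x [^] k"
  using hom_int_pow[OF conjugate_hom _ is_group is_group] by blast

lemma conjugate_mult_left:
  "\<lbrakk>z \<in> carrier G; y \<in> carrier G; x \<in> carrier G\<rbrakk> \<Longrightarrow> conjugate G (z \<otimes> y) x = conjugate G y (conjugate G z x)"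
  unfolding conjugate_def by (simp add: inv_mult_group m_assoc)

lemma conjugate_commuting: "\<lbrakk>y \<in> carrier G; x \<in> carrier G; x \<otimes> y = y \<otimes> x\<rbrakk> \<Longrightarrow> conjugate G y x = x"
  unfolding conjugate_def by (simp add: m_assoc, simp add: m_assoc[symmetric])

lemma conjugate_one [simp]: "x \<in> carrier G \<Longrightarrow> conjugate G \<one> x = x"
  unfolding conjugate_def by simp

lemma conjugate_inj: "\<lbrakk>y \<in> carrier G; x \<in> carrier G; x' \<in> carrier G; conjugate G y x = conjugate G y x'\<rbrakk> \<Longrightarrow> x = x'"
  unfolding conjugate_def by simp

lemma conjugate_int_pow_shift:
  assumes "s \<in> carrier G" "c \<in> carrier G" "e \<in> carrier G"
    and "conjugate G s c = c \<otimes> e" "conjugate G s e = e"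
  shows "conjugate G (s [^] (k::int)) c = c \<otimes> e [^] k"
proof -
  have shift: "conjugate G s (c \<otimes> e [^] j) = c \<otimes> e [^] (j + 1)" for j :: int
  proof -
    have "conjugate G s (c \<otimes> e [^] j) = c \<otimes> (e \<otimes> e [^] j)"
      using assms by (simp add: conjugate_mult conjugate_int_pow m_assoc)
    also have "e \<otimes> e [^] j = e [^] (j + 1)"
      using int_pow_mult[OF assms(3), of 1 j] assms(3) by (simp add: add.commute)
    finally show ?thesis .
  qed
  have step: "conjugate G (s [^] (j + 1)) c = conjugate G s (conjugate G (s [^] j) c)" for j :: int
  proof -
    have "s [^] (j + 1) = s [^] j \<otimes> s" using int_pow_mult[OF assms(1), of j 1] assms(1) by simp
    then show ?thesis using assms by (simp add: conjugate_mult_left)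
  qed
  show ?thesis
  proof (induction k rule: int_induct[where k = 0])
    case base
    show ?case using assms(2) by simp
  next
    case (step1 i)
    show ?case using step[of i] step1.IH shift[of i] by simp
  next
    case (step2 i)
    have "conjugate G s (conjugate G (s [^] (i - 1)) c) = conjugate G s (c \<otimes> e [^] (i - 1))"
      using step[of "i - 1"] step2.IH shift[of "i - 1"] by simp
    then show ?case by (rule conjugate_inj[OF assms(1), rotated 2]) (use assms in simp_all)
  qed
qed

lemma funpow_conjugate: "\<lbrakk>y \<in> carrier G; x \<in> carrier G\<rbrakk> \<Longrightarrow> (conjugate G y ^^ m) x = conjugate G (y [^] m) x"
proof (induction m)
  case 0 then show ?case by (simp add: conjugate_def)
next
  case (Suc m) then show ?case by (simp add: conjugate_mult_left)
qed

lemma int_pow_eq_if_dvd: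
  assumes "x \<in> carrier G" "x [^] (m::nat) = \<one>" "int m dvd i - j"
  shows "x [^] (i::int) = x [^] j"
proof -
  have "int (ord x) dvd i - j" using assms pow_eq_id by (meson dvd_trans of_nat_dvd_iff)
  then show ?thesis using int_pow_eq[OF assms(1)] by metis
qed

lemma twisted_class_mult_twist:
  assumes "\<And>y. y \<in> carrier G \<Longrightarrow> w y \<in> carrier G"
  shows "twisted_class G (\<lambda>y. y \<otimes> w y) = w ` carrier G"
proof -
  have "inv z \<otimes> (z \<otimes> w z) = w z" if "z \<in> carrier G" for z
    using that assms by (simp add: m_assoc[symmetric])
  then show ?thesis unfolding twisted_class_def by (auto intro: sym)
qed

lemma crossed_hom_iso:
  assumes "subgroup A G" and w: "\<And>y. y \<in> carrier G \<Longrightarrow> w y \<in> A"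
    and crossed: "\<And>z y. \<lbrakk>z \<in> carrier G; y \<in> carrier G\<rbrakk> \<Longrightarrow> w (z \<otimes> y) = conjugate G y (w z) \<otimes> w y"
    and coset: "\<And>y b. \<lbrakk>y \<in> carrier G; b \<in> A\<rbrakk> \<Longrightarrow> w (y \<otimes> b) = w y"
  shows "(\<lambda>y. y \<otimes> w y) \<in> iso G G"
proof -
  interpret A: subgroup A G by fact
  have wG: "w y \<in> carrier G" if "y \<in> carrier G" for y using w that by simp
  have "z \<otimes> w z \<otimes> (y \<otimes> w y) = z \<otimes> y \<otimes> w (z \<otimes> y)" if "z \<in> carrier G" "y \<in> carrier G" for z y
    using that wG by (simp add: crossed conjugate_def m_assoc, simp add: m_assoc[symmetric])
  then have hom: "(\<lambda>y. y \<otimes> w y) \<in> hom G G" using wG by (auto simp: hom_def)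
  have inj: "inj_on (\<lambda>y. y \<otimes> w y) (carrier G)"
  proof (rule inj_onI)
    fix z y assume z: "z \<in> carrier G" and y: "y \<in> carrier G" and eq: "z \<otimes> w z = y \<otimes> w y"
    define b where "b = w y \<otimes> inv (w z)"
    have "b \<in> A" unfolding b_def using w y z by simp
    moreover have "z = y \<otimes> w y \<otimes> inv (w z)"
      using inv_solve_right[of z "y \<otimes> w y" "w z"] eq z y wG by simp
    then have "z = y \<otimes> b" unfolding b_def using y wG z by (simp add: m_assoc)
    ultimately have "w z = w y" using coset y by simp
    then show "z = y" using eq z y wG by simp
  qed
  have "y \<in> (\<lambda>y. y \<otimes> w y) ` carrier G" if y: "y \<in> carrier G" for y
  proof
    have "w (y \<otimes> inv (w y)) = w y" using coset y w by simp
    then show "y = y \<otimes> inv (w y) \<otimes> w (y \<otimes> inv (w y))" using y wG by (simp add: m_assoc)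
  qed (use y wG in simp)
  then have "(\<lambda>y. y \<otimes> w y) ` carrier G = carrier G" using hom by (auto simp: hom_def)
  then show ?thesis using hom inj by (simp add: iso_iff)
qed

end

section \<open>An endomorphism of an abelian p-group\<close>

context comm_group
begin

lemma subgroup_pow_eq_one: "subgroup {x \<in> carrier G. x [^] (m::nat) = \<one>} G"
proof (rule subgroupI)
  fix x y assume "x \<in> {x \<in> carrier G. x [^] m = \<one>}" "y \<in> {x \<in> carrier G. x [^] m = \<one>}"
  then show "x \<otimes> y \<in> {x \<in> carrier G. x [^] m = \<one>}"
    by (simp add: pow_mult_distrib m_comm)
qed (auto simp: nat_pow_inv)

lemma hom_inv_mult_endomorphism:
  assumes "\<alpha> \<in> hom G G"
  shows "(\<lambda>x. inv x \<otimes> \<alpha> x) \<in> hom G G"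
proof -
  have "inv (x \<otimes> y) \<otimes> \<alpha> (x \<otimes> y) = inv x \<otimes> \<alpha> x \<otimes> (inv y \<otimes> \<alpha> y)"
    if "x \<in> carrier G" "y \<in> carrier G" for x y
    using assms that by (simp add: hom_mult inv_mult m_ac hom_in_carrier)
  then show ?thesis using assms by (auto simp: hom_def)
qed

lemma card_subgroup_prime_power:
  assumes "card (carrier G) = p ^ k" "Factorial_Ring.prime p" "subgroup H G"
  obtains i where "card H = p ^ i"
  using lagrange[OF assms(3)] assms(1,2) divides_primepow_nat unfolding order_def
  by (metis dvd_triv_right)

lemma twisted_powers_mult:
  assumes "c \<in> carrier G" "d \<in> carrier G"
  shows "(c \<otimes> d [^] j) [^] i \<otimes> d [^] u \<otimes> (c [^] j \<otimes> d [^] v)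
       = c [^] (i + j) \<otimes> d [^] (i * j + u + v :: int)"
proof -
  have "(c \<otimes> d [^] j) [^] i = c [^] i \<otimes> d [^] (j * i)"
    using assms by (simp add: int_pow_distrib int_pow_pow)
  then show ?thesis using assms by (simp add: int_pow_mult m_ac mult.commute)
qed

lemma twisted_square_cancel:
  assumes "c \<in> carrier G" "d \<in> carrier G"
    and "c \<otimes> c = c [^] (i::int) \<otimes> d [^] (u::int)"
    and "(c \<otimes> d) \<otimes> (c \<otimes> d) = (c \<otimes> d) [^] i \<otimes> d [^] u"
  shows "d [^] i = d \<otimes> d"
proof -
  have "(c \<otimes> c) \<otimes> (d \<otimes> d) = (c \<otimes> d) \<otimes> (c \<otimes> d)" using assms(1,2) by (simp add: m_ac)
  also have "\<dots> = (c \<otimes> d) [^] i \<otimes> d [^] u" by (rule assms(4))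
  also have "\<dots> = (c [^] i \<otimes> d [^] u) \<otimes> d [^] i" using assms(1,2) by (simp add: int_pow_distrib m_ac)
  also have "\<dots> = (c \<otimes> c) \<otimes> d [^] i" using assms(3) by simp
  finally show ?thesis using assms(1,2) by simp
qed

lemma exists_twisting_pair:
  assumes "finite (carrier G)" "card (carrier G) = p ^ k" "Factorial_Ring.prime p"
    and "\<alpha> \<in> hom G G" "\<forall>x\<in>carrier G. (\<alpha> ^^ (p ^ e)) x = x"
    and "a \<in> carrier G" "a [^] p = \<one>" "\<alpha> a \<noteq> a"
  obtains c d where "c \<in> carrier G" "c [^] p = \<one>" "d \<in> carrier G" "d [^] p = \<one>" "d \<noteq> \<one>"
    "\<alpha> c = c \<otimes> d" "\<alpha> d = d"
proof -
  define \<Omega> where "\<Omega> = {x \<in> carrier G. x [^] p = \<one>}"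
  define \<nu> where "\<nu> = (\<lambda>x. inv x \<otimes> \<alpha> x)"
  interpret \<alpha>: group_hom G G \<alpha>
    using assms(4) by (simp add: group_hom_def group_hom_axioms_def)
  interpret \<nu>: group_hom G G \<nu>
    using hom_inv_mult_endomorphism[OF assms(4)] unfolding \<nu>_def
    by (simp add: group_hom_def group_hom_axioms_def)
  have \<alpha>\<Omega>: "\<alpha> x \<in> \<Omega>" and \<nu>\<Omega>: "\<nu> x \<in> \<Omega>" if "x \<in> \<Omega>" for x
    using that \<alpha>.hom_nat_pow[of x p, symmetric] \<nu>.hom_nat_pow[of x p, symmetric] unfolding \<Omega>_def by auto
  define W where "W = \<nu> ` \<Omega>"
  have W: "subgroup W G"
    unfolding W_def \<Omega>_def by (rule \<nu>.subgroup_img_is_subgroup[OF subgroup_pow_eq_one])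
  have \<alpha>W: "\<alpha> ` W \<subseteq> W"
  proof
    fix y assume "y \<in> \<alpha> ` W"
    then obtain x where x: "x \<in> \<Omega>" "y = \<alpha> (\<nu> x)" unfolding W_def by auto
    then have "y = \<nu> (\<alpha> x)" unfolding \<nu>_def \<Omega>_def by simp
    then show "y \<in> W" unfolding W_def using \<alpha>\<Omega>[OF x(1)] by simp
  qed
  have "\<one> \<in> W" using subgroup.one_closed[OF W] .
  moreover have "\<nu> a \<in> W" using assms(6,7) unfolding W_def \<Omega>_def by auto
  moreover have "\<nu> a \<noteq> \<one>"
    using assms(6,8) inv_solve_left[of \<one> a "\<alpha> a"] unfolding \<nu>_def by auto
  ultimately have "card W \<noteq> 1" by (auto simp: card_1_singleton_iff)
  moreover obtain i where "card W = p ^ i" using card_subgroup_prime_power[OF assms(2,3) W] .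
  ultimately have "p dvd card W" by (cases i) auto
  moreover have "finite W" "\<forall>x\<in>W. (\<alpha> ^^ (p ^ e)) x = x"
    using assms(1,5) subgroup.subset[OF W] finite_subset by auto
  ultimately obtain d where d: "d \<in> W" "d \<noteq> \<one>" "\<alpha> d = d"
    using exists_other_fixed_point[OF _ \<alpha>W assms(3) _ _ \<open>\<one> \<in> W\<close> \<alpha>.hom_one] by blast
  then obtain c where c: "c \<in> \<Omega>" "d = \<nu> c" unfolding W_def by auto
  have "\<alpha> c = c \<otimes> d" using c unfolding \<nu>_def \<Omega>_def by (simp add: m_assoc[symmetric])
  moreover have "d \<in> \<Omega>" using c \<nu>\<Omega> by simp
  ultimately show ?thesis using c d unfolding \<Omega>_def by (intro that[of c d]) auto
qed

end

section \<open>Normal abelian subgroups with cyclic quotient\<close>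

context normal
begin

lemma pow_order_quotient_mem:
  assumes "x \<in> carrier G"
  shows "x [^] order (G Mod H) \<in> H"
proof -
  have hom: "(\<lambda>a. H #> a) \<in> hom G (G Mod H)" by (rule r_coset_hom_Mod)
  have "H #> x [^] order (G Mod H) = (H #> x) [^]\<^bsub>G Mod H\<^esub> order (G Mod H)"
    using hom_nat_pow[OF hom assms is_group factorgroup_is_group] .
  also have "\<dots> = H"
    using group.pow_order_eq_1[OF factorgroup_is_group] hom assms by (auto simp: hom_def)
  finally show ?thesis using rcos_self[OF _ subgroup_axioms] assms by (metis nat_pow_closed)
qed

lemma cyclic_quotient_decomposition:
  assumes "t \<in> carrier G" "generate (G Mod H) {H #> t} = carrier (G Mod H)" "y \<in> carrier G"
  obtains b and k :: int where "b \<in> H" "y = b \<otimes> t [^] k"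
proof -
  have hom: "(\<lambda>a. H #> a) \<in> hom G (G Mod H)" by (rule r_coset_hom_Mod)
  have t: "H #> t \<in> carrier (G Mod H)" using hom assms(1) by (auto simp: hom_def)
  have "H #> y \<in> generate (G Mod H) {H #> t}"
    using assms hom by (auto simp: hom_def)
  then obtain k :: int where "H #> y = (H #> t) [^]\<^bsub>G Mod H\<^esub> k"
    unfolding group.generate_pow[OF factorgroup_is_group t] by blast
  also have "\<dots> = H #> t [^] k"
    using hom_int_pow[OF hom assms(1) is_group factorgroup_is_group] by simp
  finally have "y \<in> H #> t [^] k" using rcos_self[OF assms(3) subgroup_axioms] by simp
  then show ?thesis using that unfolding r_coset_def by auto
qed

lemma conjugate_abelian:
  assumes "comm_group (G\<lparr>carrier := H\<rparr>)" "b \<in> H" "x \<in> H"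
  shows "conjugate G b x = x"
  using comm_monoid.m_comm[OF comm_group.axioms(1)[OF assms(1)], of x b] assms(2,3) subset
  by (intro conjugate_commuting) auto

lemma exists_twisting_pair_conjugate:
  assumes "comm_group (G\<lparr>carrier := H\<rparr>)" "finite H" "card H = p ^ k" "Factorial_Ring.prime p"
    and "t \<in> carrier G" "t [^] (p ^ n) \<in> H"
    and "a \<in> H" "a [^] p = \<one>" "conjugate G t a \<noteq> a"
  obtains c d where "c \<in> H" "c [^] p = \<one>" "d \<in> H" "d [^] p = \<one>" "d \<noteq> \<one>"
    "conjugate G t c = c \<otimes> d" "conjugate G t d = d"
proof -
  have "conjugate G t x \<in> H" if "x \<in> H" for x
    using inv_op_closed1[OF assms(5) that] unfolding conjugate_def .
  then have "conjugate G t \<in> hom (G\<lparr>carrier := H\<rparr>) (G\<lparr>carrier := H\<rparr>)"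
    using assms(5) subset by (auto simp: hom_def conjugate_mult)
  moreover have "\<forall>x\<in>H. (conjugate G t ^^ (p ^ n)) x = x"
    using assms(1,5,6) subset by (auto simp: funpow_conjugate conjugate_abelian)
  ultimately show ?thesis
    using comm_group.exists_twisting_pair[OF assms(1) _ _ assms(4), of k "conjugate G t" n a] assms(2,3,7-9) that
    by (simp add: nat_pow_consistent[symmetric]) blast
qed

end

section \<open>The twisting automorphism\<close>

lemma triangular_number_add:
  fixes i j :: int
  shows "(i + j) * (i + j - 1) div 2 = i * j + i * (i - 1) div 2 + j * (j - 1) div 2"
proof -
  have half: "2 * (x * (x - 1) div 2) = x * (x - 1)" for x :: int by simp
  have "2 * ((i + j) * (i + j - 1) div 2) = 2 * (i * j + i * (i - 1) div 2 + j * (j - 1) div 2)"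
    unfolding distrib_left half by (simp add: algebra_simps)
  then show ?thesis by (metis mult_left_cancel zero_neq_numeral)
qed

lemma triangular_number_cong:
  fixes p :: nat and i j :: int
  assumes "odd p" "int p dvd i - j"
  shows "int p dvd i * (i - 1) div 2 - j * (j - 1) div 2"
proof -
  have half: "2 * (x * (x - 1) div 2) = x * (x - 1)" for x :: int by simp
  have "2 * (i * (i - 1) div 2 - j * (j - 1) div 2) = (i - j) * (i + j - 1)"
    unfolding right_diff_distrib half by (simp add: algebra_simps)
  then have "int p dvd 2 * (i * (i - 1) div 2 - j * (j - 1) div 2)" using assms(2) by simp
  moreover have "coprime (int p) 2" using assms(1) by simp
  ultimately show ?thesis using coprime_dvd_mult_right_iff by blast
qed

locale twisting_pair = normal A G for A and G (structure) +
  fixes p :: nat and t c d :: 'a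
  assumes comm_A: "comm_group (G\<lparr>carrier := A\<rparr>)"
    and prime_p: "Factorial_Ring.prime p" and odd_p: "odd p"
    and t_carrier: "t \<in> carrier G"
    and quotient_generated: "generate (G Mod A) {A #> t} = carrier (G Mod A)"
    and c_A: "c \<in> A" and c_pow: "c [^] p = \<one>"
    and d_A: "d \<in> A" and d_pow: "d [^] p = \<one>" and d_ne_one: "d \<noteq> \<one>"
    and conjugate_t_c: "conjugate G t c = c \<otimes> d"
    and conjugate_t_d: "conjugate G t d = d"
begin

lemma c_carrier [simp]: "c \<in> carrier G" and d_carrier [simp]: "d \<in> carrier G"
  using c_A d_A subset by auto

lemma int_pow_A: "x \<in> A \<Longrightarrow> x [^] (k::int) \<in> A"
  using subgroup_int_pow_closed[OF subgroup_axioms] .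

lemma int_pow_A_consistent: "x \<in> A \<Longrightarrow> x [^]\<^bsub>G\<lparr>carrier := A\<rparr>\<^esub> (k::int) = x [^] k"
  using int_pow_consistent[OF subgroup_axioms] by simp

lemma conjugate_A: "b \<in> A \<Longrightarrow> x \<in> A \<Longrightarrow> conjugate G b x = x"
  using conjugate_abelian[OF comm_A] .

lemma conjugate_c_d:
  assumes "y \<in> carrier G"
  obtains k :: int where "conjugate G y c = c \<otimes> d [^] k" "conjugate G y d = d"
proof -
  obtain b and k :: int where b: "b \<in> A" "y = b \<otimes> t [^] k"
    using cyclic_quotient_decomposition[OF t_carrier quotient_generated assms] .
  have "conjugate G y x = conjugate G (t [^] k) x" if "x \<in> A" for x
    using b that subset t_carrier by (auto simp: conjugate_mult_left conjugate_A)
  moreover have "conjugate G (t [^] k) c = c \<otimes> d [^] k"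
    using conjugate_int_pow_shift[OF t_carrier c_carrier d_carrier conjugate_t_c conjugate_t_d] .
  moreover have "conjugate G (t [^] k) d = d"
    using conjugate_int_pow_shift[of t d \<one> k] t_carrier conjugate_t_d by (simp add: conjugate_def)
  ultimately show ?thesis using that c_A d_A by simp
qed

lemma conjugate_d [simp]: "y \<in> carrier G \<Longrightarrow> conjugate G y d = d"
  by (metis conjugate_c_d)

definition twist_index :: "'a \<Rightarrow> int" where
  "twist_index y = (SOME k. conjugate G y c = c \<otimes> d [^] k)"

lemma conjugate_c: "y \<in> carrier G \<Longrightarrow> conjugate G y c = c \<otimes> d [^] twist_index y"
  unfolding twist_index_def by (rule someI_ex) (metis conjugate_c_d)

lemma d_int_pow_eq_iff: "d [^] (i::int) = d [^] j \<longleftrightarrow> int p dvd i - j"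
proof -
  have "ord d dvd p" using d_pow pow_eq_id by simp
  moreover have "ord d \<noteq> 1" using ord_eq_1 d_ne_one by simp
  ultimately have "ord d = p" using prime_p prime_nat_iff by blast
  then show ?thesis using int_pow_eq[OF d_carrier] by (simp add: dvd_diff_commute)
qed

lemma twist_index_unique:
  assumes "y \<in> carrier G" "conjugate G y c = c \<otimes> d [^] k"
  shows "int p dvd k - twist_index y"
  using assms conjugate_c[OF assms(1)] by (simp flip: d_int_pow_eq_iff)

lemma twist_index_mult:
  assumes "z \<in> carrier G" "y \<in> carrier G"
  shows "int p dvd (twist_index z + twist_index y) - twist_index (z \<otimes> y)"
proof (rule twist_index_unique)
  have "conjugate G (z \<otimes> y) c = c \<otimes> d [^] twist_index y \<otimes> d [^] twist_index z"
    using assms by (subst conjugate_mult_left) (simp_all add: conjugate_c conjugate_mult conjugate_int_pow)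
  then show "conjugate G (z \<otimes> y) c = c \<otimes> d [^] (twist_index z + twist_index y)"
    by (simp add: m_assoc int_pow_mult add.commute)
qed (use assms in simp)

lemma twist_index_A: "b \<in> A \<Longrightarrow> int p dvd twist_index b"
  using twist_index_unique[of b 0] conjugate_A c_A subset by auto

lemma twist_index_t: "int p dvd 1 - twist_index t"
  using twist_index_unique[of t 1] conjugate_t_c t_carrier by simp

definition twist_word :: "int \<Rightarrow> 'a" where
  "twist_word i = c [^] i \<otimes> d [^] (i * (i - 1) div 2)"

lemma twist_word_A: "twist_word i \<in> A"
  unfolding twist_word_def using int_pow_A c_A d_A by simp

lemma twist_word_cong:
  assumes "int p dvd i - j"
  shows "twist_word i = twist_word j"
  using int_pow_eq_if_dvd[OF c_carrier c_pow assms] triangular_number_cong[OF odd_p assms]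
  unfolding twist_word_def by (simp add: d_int_pow_eq_iff)

lemma conjugate_twist_word:
  "y \<in> carrier G \<Longrightarrow>
    conjugate G y (twist_word i) = (c \<otimes> d [^] twist_index y) [^] i \<otimes> d [^] (i * (i - 1) div 2)"
  unfolding twist_word_def by (simp add: conjugate_mult conjugate_int_pow conjugate_c)

lemma twist_word_add:
  "(c \<otimes> d [^] j) [^] i \<otimes> d [^] (i * (i - 1) div 2) \<otimes> twist_word j = twist_word (i + j)"
  using comm_group.twisted_powers_mult[OF comm_A, of c d j i "i * (i - 1) div 2" "j * (j - 1) div 2"]
  unfolding twist_word_def triangular_number_add
  by (simp add: c_A d_A int_pow_A int_pow_A_consistent)

definition twist :: "'a \<Rightarrow> 'a" where
  "twist y = twist_word (twist_index y)"

lemma twist_A: "twist y \<in> A"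
  unfolding twist_def by (rule twist_word_A)

lemma twist_crossed:
  assumes "z \<in> carrier G" "y \<in> carrier G"
  shows "twist (z \<otimes> y) = conjugate G y (twist z) \<otimes> twist y"
proof -
  have "twist (z \<otimes> y) = twist_word (twist_index z + twist_index y)"
    unfolding twist_def using twist_index_mult[OF assms]
    by (intro twist_word_cong) (simp add: dvd_diff_commute)
  then show ?thesis
    unfolding twist_def using assms by (simp add: conjugate_twist_word twist_word_add)
qed

lemma twist_coset:
  assumes "y \<in> carrier G" "b \<in> A"
  shows "twist (y \<otimes> b) = twist y"
proof -
  have "int p dvd twist_index b - ((twist_index y + twist_index b) - twist_index (y \<otimes> b))"
    using dvd_diff[OF twist_index_A[OF assms(2)] twist_index_mult[OF assms(1) subsetD[OF subset assms(2)]]] .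
  then show ?thesis unfolding twist_def by (intro twist_word_cong) (simp add: algebra_simps)
qed

lemma twist_t: "twist t = c"
  using twist_word_cong[OF twist_index_t] unfolding twist_def twist_word_def by simp

lemma twist_image_not_subgroup: "\<not> subgroup (twist ` carrier G) G"
proof
  assume sub: "subgroup (twist ` carrier G) G"
  have "c \<in> twist ` carrier G" using image_eqI[of c twist t] twist_t t_carrier by simp
  then have "c \<otimes> c \<in> twist ` carrier G" using subgroup.m_closed[OF sub] by blast
  then obtain i where i: "c \<otimes> c = twist_word i" unfolding twist_def by auto
  have d_t: "d [^] twist_index t = d"
    using twist_index_t d_int_pow_eq_iff[of "twist_index t" 1] by (simp add: dvd_diff_commute)
  have "(c \<otimes> d) \<otimes> (c \<otimes> d) = conjugate G t (c \<otimes> c)"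
    using t_carrier by (simp add: conjugate_mult conjugate_t_c)
  also have "\<dots> = (c \<otimes> d) [^] i \<otimes> d [^] (i * (i - 1) div 2)"
    unfolding i using t_carrier d_t by (simp add: conjugate_twist_word)
  finally have "d [^] i = d \<otimes> d"
    using comm_group.twisted_square_cancel[OF comm_A, of c d i] i c_A d_A
    by (simp add: twist_word_def int_pow_A int_pow_A_consistent)
  then have "twist_word i = twist_word 2"
    using twist_word_cong d_int_pow_eq_iff[of i 2] by (simp add: int_pow_def2 numeral_2_eq_2)
  moreover have "twist_word 2 = c \<otimes> c \<otimes> d"
    by (simp add: twist_word_def int_pow_def2 numeral_2_eq_2)
  ultimately have "c \<otimes> c = c \<otimes> c \<otimes> d" using i by simp
  then show False using d_ne_one by simp
qed

theorem exists_iso_twisted_class_not_subgroup: "\<exists>\<phi> \<in> iso G G. \<not> subgroup (twisted_class G \<phi>) G"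
proof
  show "(\<lambda>y. y \<otimes> twist y) \<in> iso G G"
    using crossed_hom_iso[OF subgroup_axioms] twist_A twist_crossed twist_coset by blast
  show "\<not> subgroup (twisted_class G (\<lambda>y. y \<otimes> twist y)) G"
    using twisted_class_mult_twist[of twist] twist_A subset twist_image_not_subgroup by auto
qed

end

theorem (in normal) conjugate_fixes_Omega1:
  assumes "Factorial_Ring.prime p" "p > 2" "finite H" "comm_group (G\<lparr>carrier := H\<rparr>)" "card H = p ^ k"
    and "G Mod H \<cong> integer_mod_group (p ^ n)"
    and "t \<in> carrier G" "generate (G Mod H) {H #> t} = carrier (G Mod H)"
    and "\<forall>\<phi> \<in> iso G G. subgroup (twisted_class G \<phi>) G"
    and "a \<in> Omega G p 1 H"
  shows "conjugate G t a = a"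
proof (rule ccontr)
  assume moved: "conjugate G t a \<noteq> a"
  have a: "a \<in> H" "a [^] p = \<one>" using assms(10) unfolding Omega_def by auto
  have "order (G Mod H) = p ^ n"
    using iso_same_card[OF assms(6)] assms(2)
    by (simp add: order_def carrier_integer_mod_group flip: of_nat_power)
  then have "t [^] (p ^ n) \<in> H" using pow_order_quotient_mem[OF assms(7)] by simp
  then obtain c d where "c \<in> H" "c [^] p = \<one>" "d \<in> H" "d [^] p = \<one>" "d \<noteq> \<one>"
    "conjugate G t c = c \<otimes> d" "conjugate G t d = d"
    using exists_twisting_pair_conjugate[OF assms(4,3,5,1,7) _ a moved] by blast
  then interpret twisting_pair H G p t c d
    using assms(1,2,4,7,8) prime_odd_nat
    by (intro twisting_pair.intro twisting_pair_axioms.intro normal.intro subgroup_axioms is_group normal_axioms) auto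
  show False using exists_iso_twisted_class_not_subgroup assms(9) by blast
qed

theorem mainTheorem11:
  fixes G :: "('a, 'b) monoid_scheme" and A :: "'a set" and t :: 'a and p n :: nat
  assumes "group G"
    and "Factorial_Ring.prime p" and "p > 2" and "n \<ge> 1"
    and "A \<lhd> G"
    and "finite A"
    and "comm_group (G\<lparr>carrier := A\<rparr>)"
    and "\<exists>k. card A = p ^ k"
    and "G Mod A \<cong> integer_mod_group (p ^ n)"
    and "t \<in> carrier G"
    and "generate (G Mod A) {A #>\<^bsub>G\<^esub> t} = carrier (G Mod A)"
    and "\<forall>\<phi> \<in> iso G G. subgroup (twisted_class G \<phi>) G"
  shows "\<forall>a \<in> Omega G p 1 A. inv\<^bsub>G\<^esub> t \<otimes>\<^bsub>G\<^esub> a \<otimes>\<^bsub>G\<^esub> t = a"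
proof -
  interpret normal A G by (rule assms(5))
  obtain k where "card A = p ^ k" using assms(8) ..
  then show ?thesis
    using conjugate_fixes_Omega1[OF assms(2,3,6,7) _ assms(9-12)] unfolding conjugate_def by blast
qed

end
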